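(* Let $\mathbb K$ be a field with $\operatorname{char}(\mathbb K)=0$, let $n\ge2$, and let $\mathcal G_n$, $\mathcal N_{0,n}$ and $U_m(z_g)$ be as in the context. Suppose $f\in A_{\mathbb K}(\mathcal G_n)$ has the form $$f=\sum_{g\in\mathcal N_{0,n}}c_g1_{U_m(z_g)}\qquad\text{for some }c_g\in\mathbb K\text{ and }m\in\mathbb N.$$ Then $f$ belongs to the ideal $S_{\mathbb K}(\mathcal G_n)$ of singular functions if and only if $f$ is the zero function.
   Context: Let $X=\{\mathbf 0,\mathbf 1\}$, $X^*$ the finite words (with empty word $\varnothing$), $X^\omega$ the infinite words, $C(\eta)=\{\eta w:w\in X^\omega\}$, $\mathbf 1^m$ and $\mathbf 1^\infty$ the finite/infinite words of ones. Fix $n\ge2$, a primitive polynomial $f_n$ of degree $n$ over $\mathbb F_2$ with root $\alpha$, and $\operatorname{Tr}(\beta)=\beta+\beta^2+\dots+\beta^{2^{n-1}}\in\mathbb F_2$. $\mathfrak G_n$ is the group of automorphisms of the binary rooted tree $X^*$ generated by $a$ ($a\cdot(\mathbf 0w)=\mathbf 1w$, $a\cdot(\mathbf 1w)=\mathbf 0w$) and $\iota_n(\beta)$, $\beta\in\mathbb F_{2^n}$, where $\iota_n(\beta)\cdot(\mathbf 0w)=\mathbf 0(a^{\operatorname{Tr}(\beta)}\cdot w)$, $\iota_n(\beta)\cdot(\mathbf 1w)=\mathbf 1(\iota_n(\alpha\beta)\cdot w)$; restrictions $g|_x$ are given by $g\cdot(xw)=(g\cdot x)(g|_x\cdot w)$.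 $\mathcal N_{0,n}=\iota_n(\mathbb F_{2^n})$, $e=\iota_n(0)$. $\mathcal G_n$ is the groupoid of germs of the action of the inverse semigroup $\{(\eta,g,\mu)\}\cup\{0\}$ on $X^\omega$ with $(\eta,g,\mu):C(\mu)\to C(\eta)$, $\mu w\mapsto\eta(g\cdot w)$; germs $[(\eta,g,\mu),w]$, $w\in C(\mu)$, with $[(\eta,g,\mu),w]=[(\eta',g',\mu'),w']$ iff $w=w'$ and some finite prefix $\nu=\mu\epsilon=\mu'\epsilon'$ of $w$ satisfies $\eta(g\cdot\epsilon)=\eta'(g'\cdot\epsilon')$ and $g|_\epsilon=g'|_{\epsilon'}$; basic open bisections $\Theta(s,U)=\{[s,w]:w\in U\}$. It is a second countable ample groupoid with Hausdorff unit space $X^\omega$. For $g\in\mathfrak G_n$, $z_g=[(\varnothing,g,\varnothing),\mathbf 1^\infty]$ and $U_m(z_g)=\Theta((\varnothing,g,\varnothing),C(\mathbf 1^m))$. $A_{\mathbb K}(\mathcal G_n)$ is the Steinberg algebra: the $\mathbb K$-span of characteristic functions of compact open bisections, with convolution. A function $f\in A_{\mathbb K}(\mathcal G_n)$ is singular if $f=\sum_{i=1}^N c_i1_{S_i}$ where each $S_i$ is a relatively closed subset of some open bisection and has empty interior; equivalently, $\operatorname{supp}(f)=\{x:f(x)\neq0\}$ has empty interior. The singular functions form an ideal $S_{\mathbb K}(\mathcal G_n)$. *)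

theory Defs
  imports "HOL-Analysis.Analysis"
begin

text \<open>Letters: False = 0, True = 1. Finite words: bool list. Infinite words: nat \<Rightarrow> bool.\<close>

definition trace :: "nat \<Rightarrow> 'a::field \<Rightarrow> 'a" where
  "trace n b = (\<Sum>i<n. b ^ (2 ^ i))"

fun flipA :: "bool list \<Rightarrow> bool list" where
  "flipA [] = []"
| "flipA (x # w) = (\<not> x) # w"

fun iota :: "nat \<Rightarrow> 'a::field \<Rightarrow> 'a \<Rightarrow> bool list \<Rightarrow> bool list" where
  "iota n al b [] = []"
| "iota n al b (False # w) = False # (if trace n b = 1 then flipA w else w)"
| "iota n al b (True # w) = True # iota n al (al * b) w"

inductive_set TG :: "nat \<Rightarrow> 'a::field \<Rightarrow> (bool list \<Rightarrow> bool list) set"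
  for n :: nat and al :: "'a" where
  TG_id: "id \<in> TG n al"
| TG_a: "g \<in> TG n al \<Longrightarrow> flipA \<circ> g \<in> TG n al"
| TG_iota: "g \<in> TG n al \<Longrightarrow> iota n al b \<circ> g \<in> TG n al"
| TG_iota_inv: "g \<in> TG n al \<Longrightarrow> inv (iota n al b) \<circ> g \<in> TG n al"

definition N0 :: "nat \<Rightarrow> 'a::field \<Rightarrow> (bool list \<Rightarrow> bool list) set" where
  "N0 n al = range (iota n al)"

definition cyl :: "bool list \<Rightarrow> (nat \<Rightarrow> bool) set" where
  "cyl \<mu> = {w. \<forall>i<length \<mu>. w i = \<mu> ! i}"

definition pref :: "(nat \<Rightarrow> bool) \<Rightarrow> nat \<Rightarrow> bool list" where
  "pref w k = map w [0..<k]"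

definition cantor_open :: "(nat \<Rightarrow> bool) set \<Rightarrow> bool" where
  "cantor_open U \<longleftrightarrow> (\<forall>w\<in>U. \<exists>k. cyl (pref w k) \<subseteq> U)"

definition restr :: "(bool list \<Rightarrow> bool list) \<Rightarrow> bool list \<Rightarrow> bool list \<Rightarrow> bool list" where
  "restr g \<epsilon> = (\<lambda>v. drop (length \<epsilon>) (g (\<epsilon> @ v)))"

type_synonym trip = "bool list \<times> (bool list \<Rightarrow> bool list) \<times> bool list"
type_synonym germ = "(trip \<times> (nat \<Rightarrow> bool)) set"

definition germ_rel :: "trip \<times> (nat \<Rightarrow> bool) \<Rightarrow> trip \<times> (nat \<Rightarrow> bool) \<Rightarrow> bool" where
  "germ_rel p q = (case p of ((\<eta>, g, \<mu>), w) \<Rightarrow> case q of ((\<eta>', g', \<mu>'), w') \<Rightarrow>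
     w = w' \<and> w \<in> cyl \<mu> \<and> w' \<in> cyl \<mu>' \<and>
     (\<exists>\<epsilon> \<epsilon>'. \<mu> @ \<epsilon> = \<mu>' @ \<epsilon>' \<and> w \<in> cyl (\<mu> @ \<epsilon>) \<and>
        \<eta> @ g \<epsilon> = \<eta>' @ g' \<epsilon>' \<and> restr g \<epsilon> = restr g' \<epsilon>'))"

text \<open>The germ [s,w], as the class of all (s',w') (with s' in the inverse semigroup) equivalent to it.\<close>
definition germ :: "nat \<Rightarrow> 'a::field \<Rightarrow> trip \<Rightarrow> (nat \<Rightarrow> bool) \<Rightarrow> germ" where
  "germ n al s w = {q. fst (snd (fst q)) \<in> TG n al \<and> germ_rel (s, w) q}"

definition Theta :: "nat \<Rightarrow> 'a::field \<Rightarrow> trip \<Rightarrow> (nat \<Rightarrow> bool) set \<Rightarrow> germ set" where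
  "Theta n al s U = (\<lambda>w. germ n al s w) ` U"

definition basic_bisections :: "nat \<Rightarrow> 'a::field \<Rightarrow> germ set set" where
  "basic_bisections n al = {Theta n al (\<eta>, g, \<mu>) U | \<eta> g \<mu> U.
      g \<in> TG n al \<and> cantor_open U \<and> U \<subseteq> cyl \<mu>}"

text \<open>The groupoid of germs G_n with its topology (carrier = all germs).\<close>
definition germ_top :: "nat \<Rightarrow> 'a::field \<Rightarrow> germ topology" where
  "germ_top n al = topology_generated_by (basic_bisections n al)"

definition Uset :: "nat \<Rightarrow> 'a::field \<Rightarrow> nat \<Rightarrow> (bool list \<Rightarrow> bool list) \<Rightarrow> germ set" where
  "Uset n al m g = Theta n al ([], g, []) (cyl (replicate m True))"

definition singular :: "nat \<Rightarrow> 'a::field \<Rightarrow> (germ \<Rightarrow> 'k::zero) \<Rightarrow> bool" where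
  "singular n al f \<longleftrightarrow>
     (germ_top n al) interior_of {x \<in> topspace (germ_top n al). f x \<noteq> 0} = {}"

end

theory Submission
  imports Defs "HOL-Computational_Algebra.Polynomial"
begin

text \<open>
  After the prefix \<open>1\<^sup>k0\<close>, the automorphism \<open>\<iota>(b)\<close> acts as the identity or as the flip
  \<open>a\<close>, according to \<open>Tr(\<alpha>\<^sup>k b)\<close>. Hence for \<open>k \<ge> m\<close> the germ of \<open>\<iota>(b')\<close> at a point of
  \<open>C(1\<^sup>k0)\<close> lies in \<open>U\<^sub>m(z\<^bsub>\<iota>(b)\<^esub>)\<close> exactly when \<open>Tr(\<alpha>\<^sup>k b) = Tr(\<alpha>\<^sup>k b')\<close>. So \<open>f\<close> is constant
  on the nonempty open bisection \<open>\<Theta>((\<emptyset>, \<iota>(b'), \<emptyset>), C(1\<^sup>k0))\<close>, and its value there is the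
  sum of the \<open>c\<^bsub>\<iota>(b)\<^esub>\<close> over \<open>b\<close> in a fibre of \<open>b \<mapsto> Tr(\<alpha>\<^sup>k b)\<close>. A singular
  function vanishes somewhere on every nonempty open set, so all these fibre sums vanish.
  Every \<open>\<gamma> \<noteq> 0\<close> is some \<open>\<alpha>\<^sup>k\<close> with \<open>k \<ge> m\<close>, so \<open>b \<mapsto> c\<^bsub>\<iota>(b)\<^esub>\<close> is orthogonal to every
  nontrivial additive character \<open>b \<mapsto> (-1)\<^bsup>Tr(\<gamma> b)\<^esup>\<close> of the field. Fourier inversion,
  which needs \<open>char \<bbbK> = 0\<close>, then shows that it is zero.
\<close>

section \<open>Finite fields and the absolute trace of \<open>\<bbbF>\<^bsub>2\<^sup>n\<^esub>\<close>\<close>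

lemma of_nat_CARD_eq_0: "of_nat CARD('a::{ring_1,finite}) = (0::'a)"
proof -
  have "(\<Sum>y\<in>UNIV. y + 1) = (\<Sum>y\<in>UNIV. y :: 'a)"
    by (rule sum.reindex_bij_witness[of _ "\<lambda>y. y - 1" "\<lambda>y. y + 1"]) auto
  then show ?thesis
    by (simp add: sum.distrib)
qed

lemma power_CARD_minus_1_eq_1:
  assumes "(x::'a::{field,finite}) \<noteq> 0"
  shows "x ^ (CARD('a) - 1) = 1"
proof -
  let ?U = "UNIV - {0::'a}"
  have "(\<Prod>y\<in>?U. x * y) = (\<Prod>y\<in>?U. y)"
    by (rule prod.reindex_bij_witness[of _ "\<lambda>y. y / x" "\<lambda>y. x * y"]) (use assms in auto)
  then have "x ^ card ?U = 1"
    by (simp add: prod.distrib)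
  then show ?thesis
    by (simp add: card_Diff_singleton)
qed

lemma power_CARD_eq_self: "(x::'a::{field,finite}) ^ CARD('a) = x"
proof (cases "x = 0")
  case False
  have "CARD('a) = Suc (CARD('a) - 1)"
    using zero_less_card_finite[where 'a='a] by linarith
  then show ?thesis
    using power_CARD_minus_1_eq_1[OF False] by (metis power_Suc mult_1_right)
qed simp

lemma generator_power_ge:
  fixes a :: "'a::{field,finite}"
  assumes card: "2 < CARD('a)" and gen: "\<forall>x::'a. x \<noteq> 0 \<longrightarrow> (\<exists>k. x = a ^ k)" and "\<gamma> \<noteq> 0"
  shows "\<exists>k\<ge>m. \<gamma> = a ^ k"
proof -
  have "a \<noteq> 0"
  proof
    assume "a = 0"
    then have "UNIV \<subseteq> {0, 1::'a}"
      using gen by (auto simp: power_0_left split: if_splits)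
    then have "CARD('a) \<le> card {0, 1::'a}"
      by (rule card_mono[rotated]) simp
    with card show False
      by simp
  qed
  obtain j where "\<gamma> = a ^ j"
    using gen \<open>\<gamma> \<noteq> 0\<close> by blast
  moreover have "a ^ (j + (CARD('a) - 1) * m) = a ^ j"
    using power_CARD_minus_1_eq_1[OF \<open>a \<noteq> 0\<close>] by (simp add: power_add power_mult)
  moreover have "m \<le> j + (CARD('a) - 1) * m"
    using mult_le_mono1[of 1 "CARD('a) - 1" m] card by linarith
  ultimately show ?thesis
    by metis
qed

definition trace_sign :: "nat \<Rightarrow> 'a::field \<Rightarrow> 'b::ring_1" where
  "trace_sign n x = (if trace n x = 1 then -1 else 1)"

lemma trace_0 [simp]: "trace n 0 = 0"
  by (simp add: trace_def power_0_left)

context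
  fixes n :: nat
  assumes card_F: "CARD('F::{field,finite}) = 2 ^ n" and n_pos: "n \<ge> 1"
begin

lemma CHAR_eq_2: "CHAR('F) = 2"
proof -
  have "prime CHAR('F)"
    by (intro prime_CHAR_semidom finite_imp_CHAR_pos) simp
  moreover have "CHAR('F) dvd 2 ^ n"
    using of_nat_CARD_eq_0[where 'a='F] card_F of_nat_eq_0_iff_char_dvd by metis
  ultimately show ?thesis
    by (metis prime_dvd_power primes_dvd_imp_eq two_is_prime_nat)
qed

lemma two_eq_0: "(2::'F) = 0"
  using of_nat_CHAR[where 'a='F] by (simp add: CHAR_eq_2)

lemma power_two_power_add: "((x::'F) + y) ^ (2 ^ i) = x ^ (2 ^ i) + y ^ (2 ^ i)"
  by (rule freshmans_dream') (simp_all add: CHAR_eq_2)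

lemma trace_add: "trace n ((x::'F) + y) = trace n x + trace n y"
  unfolding trace_def by (simp add: power_two_power_add sum.distrib)

lemma trace_square: "trace n (x::'F) ^ 2 = trace n x"
proof -
  have "trace n x ^ 2 = (\<Sum>i<n. (x ^ (2 ^ i)) ^ 2)"
    unfolding trace_def by (rule freshmans_dream_sum) (simp_all add: CHAR_eq_2)
  also have "\<dots> = (\<Sum>i<n. x ^ (2 ^ Suc i))"
    by (simp only: power_Suc2 power_mult)
  also have "\<dots> = (\<Sum>i<Suc n. x ^ (2 ^ i)) - x"
    by (simp add: sum.lessThan_Suc_shift del: sum.lessThan_Suc)
  also have "\<dots> = trace n x"
    using power_CARD_eq_self[of x] by (simp add: trace_def card_F)
  finally show ?thesis .
qed

lemma trace_eq_0_or_1: "trace n (x::'F) = 0 \<or> trace n x = 1"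
  using trace_square[of x] by (metis power2_eq_square mult_cancel_right2)

lemma trace_exists_eq_1: "\<exists>x::'F. trace n x = 1"
proof (rule ccontr)
  assume "\<nexists>x::'F. trace n x = 1"
  then have trace_vanishes: "trace n x = 0" for x :: 'F
    using trace_eq_0_or_1 by blast
  define p :: "'F poly" where "p = (\<Sum>i<n. monom 1 (2 ^ i))"
  have "coeff p (2 ^ (n - 1)) = (\<Sum>i<n. if i = n - 1 then 1 else 0)"
    by (simp add: p_def coeff_sum eq_commute)
  also have "\<dots> = 1"
    using n_pos by simp
  finally have "p \<noteq> 0"
    by auto
  have "degree p \<le> 2 ^ (n - 1)"
    unfolding p_def by (intro degree_sum_le order.trans[OF degree_monom_le]) simp_all
  moreover have "{x. poly p x = 0} = UNIV"
    using trace_vanishes by (simp add: p_def poly_sum poly_monom trace_def)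
  then have "CARD('F) \<le> degree p"
    using card_poly_roots_bound[OF \<open>p \<noteq> 0\<close>] by simp
  moreover have "2 ^ (n - 1) < CARD('F)"
    using card_F n_pos by simp
  ultimately show False
    by linarith
qed

lemma trace_sign_add:
  "trace_sign n ((x::'F) + y) = (trace_sign n x * trace_sign n y :: 'K::ring_1)"
proof -
  have "(1::'F) + 1 = 0"
    using two_eq_0 by simp
  then show ?thesis
    using trace_eq_0_or_1[of x] trace_eq_0_or_1[of y] by (auto simp: trace_sign_def trace_add)
qed

lemma sum_trace_sign_eq_0:
  assumes "(d::'F) \<noteq> 0"
  shows "(\<Sum>\<gamma>\<in>UNIV. trace_sign n (\<gamma> * d)) = (0::'K::field_char_0)"
proof -
  obtain x :: 'F where x: "trace n x = 1"
    using trace_exists_eq_1 by blast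
  let ?S = "\<Sum>\<gamma>\<in>UNIV. trace_sign n (\<gamma> * d) :: 'K"
  have "?S = (\<Sum>\<gamma>\<in>UNIV. trace_sign n ((\<gamma> + x / d) * d))"
    by (rule sum.reindex_bij_witness[of _ "\<lambda>\<gamma>. \<gamma> + x / d" "\<lambda>\<gamma>. \<gamma> - x / d"]) auto
  also have "\<dots> = - ?S"
    using assms x by (simp add: distrib_right trace_sign_add sum_negf trace_sign_def[of n x])
  finally show ?thesis
    by simp
qed

lemma trace_sign_fourier:
  fixes C :: "'F \<Rightarrow> 'K::field_char_0"
  shows "of_nat CARD('F) * C b\<^sub>0 =
    (\<Sum>\<gamma>\<in>UNIV. trace_sign n (\<gamma> * b\<^sub>0) * (\<Sum>b\<in>UNIV. C b * trace_sign n (\<gamma> * b)))"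
proof -
  have "b + b\<^sub>0 = 0 \<longleftrightarrow> b = b\<^sub>0" for b
    by (simp only: minus_CHAR_2[OF CHAR_eq_2, symmetric] right_minus_eq)
  then have orth: "(\<Sum>\<gamma>\<in>UNIV. trace_sign n (\<gamma> * (b + b\<^sub>0))) =
      (if b = b\<^sub>0 then of_nat CARD('F) else (0::'K))" for b
    using sum_trace_sign_eq_0[of "b + b\<^sub>0"] by (auto simp: trace_sign_def two_eq_0)
  have "(\<Sum>\<gamma>\<in>UNIV. trace_sign n (\<gamma> * b\<^sub>0) * (\<Sum>b\<in>UNIV. C b * trace_sign n (\<gamma> * b)))
      = (\<Sum>\<gamma>\<in>UNIV. \<Sum>b\<in>UNIV. C b * trace_sign n (\<gamma> * (b + b\<^sub>0)))"
    by (simp add: sum_distrib_left distrib_left trace_sign_add mult_ac)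
  also have "\<dots> = (\<Sum>b\<in>UNIV. C b * (\<Sum>\<gamma>\<in>UNIV. trace_sign n (\<gamma> * (b + b\<^sub>0))))"
    by (subst sum.swap) (simp add: sum_distrib_left)
  also have "\<dots> = of_nat CARD('F) * C b\<^sub>0"
    by (simp add: orth if_distrib[where f="\<lambda>z. C _ * z"] mult.commute cong: if_cong)
  finally show ?thesis ..
qed

lemma eq_0_if_trace_fibre_sums_vanish:
  fixes C :: "'F \<Rightarrow> 'K::field_char_0"
  assumes fibres: "\<And>\<gamma> t. \<gamma> \<noteq> 0 \<Longrightarrow> sum C {b. (trace n (\<gamma> * b) = 1) = t} = 0"
  shows "C b = 0"
proof -
  have "(\<Sum>b\<in>UNIV. C b * trace_sign n (\<gamma> * b)) =
      sum C {b. (trace n (\<gamma> * b) = 1) = False} - sum C {b. (trace n (\<gamma> * b) = 1) = True}" for \<gamma>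
    by (simp add: trace_sign_def if_distrib sum.If_cases sum_negf Collect_neg_eq Compl_eq_Diff_UNIV)
  moreover have
    "sum C UNIV = sum C {b. (trace n b = 1) = False} + sum C {b. (trace n b = 1) = True}"
    by (subst sum.union_disjoint[symmetric]) (auto intro!: arg_cong[where f="sum C"])
  ultimately have "(\<Sum>b\<in>UNIV. C b * trace_sign n (\<gamma> * b)) = 0" for \<gamma>
    using fibres[of 1 True] fibres[of 1 False] fibres[of \<gamma> True] fibres[of \<gamma> False]
    by (cases "\<gamma> = 0") (simp_all add: trace_sign_def)
  then have "of_nat CARD('F) * C b = 0"
    by (simp add: trace_sign_fourier)
  then show ?thesis
    by simp
qed

lemma trace_separates_points:
  assumes "(b::'F) \<noteq> b'"
  shows "\<exists>\<gamma>. \<gamma> \<noteq> 0 \<and> (trace n (\<gamma> * b) = 1) \<noteq> (trace n (\<gamma> * b') = 1)"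
proof -
  obtain x :: 'F where x: "trace n x = 1"
    using trace_exists_eq_1 by blast
  define \<gamma> where "\<gamma> = x / (b - b')"
  have "\<gamma> * b = x + \<gamma> * b'"
    using assms by (simp add: \<gamma>_def field_simps)
  moreover have "x \<noteq> 0"
    using x by auto
  ultimately show ?thesis
    using assms x two_eq_0 trace_eq_0_or_1[of "\<gamma> * b'"]
    by (intro exI[of _ \<gamma>]) (auto simp: \<gamma>_def trace_add)
qed

end

section \<open>Prefix-preserving maps and their germs\<close>

definition prefix_preserving :: "(bool list \<Rightarrow> bool list) \<Rightarrow> bool" where
  "prefix_preserving h \<longleftrightarrow>
     (\<forall>x. length (h x) = length x) \<and> (\<forall>x y. take (length x) (h (x @ y)) = h x)"

lemma prefix_preserving_append:
  "prefix_preserving h \<Longrightarrow> h (x @ y) = h x @ restr h x y"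
  unfolding prefix_preserving_def restr_def by (metis append_take_drop_id)

lemma prefix_preserving_comp:
  assumes f: "prefix_preserving f" and g: "prefix_preserving g"
  shows "prefix_preserving (f \<circ> g)"
proof -
  have "(f \<circ> g) (x @ y) = (f \<circ> g) x @ restr f (g x) (restr g x y)" for x y
    by (simp add: prefix_preserving_append[OF f] prefix_preserving_append[OF g])
  moreover have "length ((f \<circ> g) x) = length x" for x
    using f g by (simp add: prefix_preserving_def)
  ultimately show ?thesis
    by (simp add: prefix_preserving_def)
qed

lemma length_flipA [simp]: "length (flipA x) = length x"
  by (cases x) auto

lemma take_flipA_append [simp]: "take (length x) (flipA (x @ y)) = flipA x"
  by (cases x) auto

lemma flipA_flipA [simp]: "flipA (flipA x) = x"
  by (cases x) auto

lemma prefix_preserving_flipA: "prefix_preserving flipA"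
  by (simp add: prefix_preserving_def)

lemma length_iota [simp]: "length (iota n al b x) = length x"
  by (induction n al b x rule: iota.induct) auto

lemma prefix_preserving_iota: "prefix_preserving (iota n al b)"
proof -
  have "take (length x) (iota n al b (x @ y)) = iota n al b x" for x y
  proof (induction x arbitrary: b)
    case (Cons a x)
    then show ?case
      by (cases a) auto
  qed simp
  then show ?thesis
    by (simp add: prefix_preserving_def)
qed

lemma iota_iota: "iota n al b (iota n al b x) = x"
proof (induction x arbitrary: b)
  case (Cons a x)
  then show ?case
    by (cases a) auto
qed simp

lemma inv_iota: "inv (iota n al b) = iota n al b"
  by (rule inv_unique_comp) (simp_all add: fun_eq_iff iota_iota)

lemma iota_in_TG: "iota n al b \<in> TG n al"
  using TG_iota[OF TG_id] by simp

lemma prefix_preserving_TG: "g \<in> TG n al \<Longrightarrow> prefix_preserving g"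
proof (induction rule: TG.induct)
  case TG_id
  then show ?case
    by (simp add: prefix_preserving_def)
next
  case (TG_a g)
  then show ?case
    by (intro prefix_preserving_comp prefix_preserving_flipA)
next
  case (TG_iota g b)
  then show ?case
    by (intro prefix_preserving_comp prefix_preserving_iota)
next
  case (TG_iota_inv g b)
  then show ?case
    unfolding inv_iota by (intro prefix_preserving_comp prefix_preserving_iota)
qed

lemma cyl_Nil [simp]: "cyl [] = UNIV"
  by (simp add: cyl_def)

lemma in_cyl_pref [simp]: "w \<in> cyl (pref w L)"
  by (simp add: cyl_def pref_def)

lemma length_pref [simp]: "length (pref w L) = L"
  by (simp add: pref_def)

lemma pref_eq_append:
  assumes "w \<in> cyl \<mu>" "length \<mu> \<le> L"
  shows "pref w L = \<mu> @ drop (length \<mu>) (pref w L)"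
proof -
  have "take (length \<mu>) (pref w L) = \<mu>"
    using assms by (intro nth_equalityI) (auto simp: cyl_def pref_def)
  then show ?thesis
    by (metis append_take_drop_id)
qed

lemma cantor_open_cyl: "cantor_open (cyl \<mu>)"
proof -
  have "pref w (length \<mu>) = \<mu>" if "w \<in> cyl \<mu>" for w
    using pref_eq_append[OF that order_refl] by simp
  then show ?thesis
    unfolding cantor_open_def by (metis order_refl)
qed

lemma germ_self:
  "g \<in> TG n al \<Longrightarrow> w \<in> cyl \<mu> \<Longrightarrow> ((\<eta>, g, \<mu>), w) \<in> germ n al (\<eta>, g, \<mu>) w"
  unfolding germ_def germ_rel_def by (auto intro!: exI[of _ "[]"])

lemma germ_snd: "q \<in> germ n al s w \<Longrightarrow> snd q = w"
  unfolding germ_def germ_rel_def by (auto split: prod.splits)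

lemma restr_restr: "restr (restr g x) u = restr g (x @ u)"
  by (simp add: restr_def fun_eq_iff add.commute)

lemma germ_subset_if_agree:
  assumes g: "prefix_preserving g" and w: "w \<in> cyl \<mu>" and agree: "\<And>v. h (\<mu> @ v) = g (\<mu> @ v)"
  shows "germ n al (\<eta>, g, []) w \<subseteq> germ n al (\<eta>, h, []) w"
proof
  fix q
  assume q: "q \<in> germ n al (\<eta>, g, []) w"
  obtain \<eta>' g' \<mu>' w' where q_def: "q = ((\<eta>', g', \<mu>'), w')"
    by (metis prod.exhaust)
  from q obtain \<epsilon>' where g': "g' \<in> TG n al" and "w' = w" "w \<in> cyl \<mu>'" "w \<in> cyl (\<mu>' @ \<epsilon>')"
    and img: "\<eta> @ g (\<mu>' @ \<epsilon>') = \<eta>' @ g' \<epsilon>'" and res: "restr g (\<mu>' @ \<epsilon>') = restr g' \<epsilon>'"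
    unfolding q_def germ_def germ_rel_def by auto
  \<comment> \<open>a common prefix of \<open>w\<close> refining both \<open>\<mu>'\<epsilon>'\<close> and \<open>\<mu>\<close> witnesses the new relation\<close>
  define \<epsilon> where "\<epsilon> = pref w (max (length (\<mu>' @ \<epsilon>')) (length \<mu>))"
  obtain u where u: "\<epsilon> = (\<mu>' @ \<epsilon>') @ u"
    using pref_eq_append[OF \<open>w \<in> cyl (\<mu>' @ \<epsilon>')\<close>] unfolding \<epsilon>_def by (metis max.cobounded1)
  obtain u' where u': "\<epsilon> = \<mu> @ u'"
    using pref_eq_append[OF w] unfolding \<epsilon>_def by (metis max.cobounded2)
  have "h (\<epsilon> @ v) = g (\<epsilon> @ v)" for v
    using agree[of "u' @ v"] by (simp add: u')
  then have "h \<epsilon> = g \<epsilon>" "restr h \<epsilon> = restr g \<epsilon>"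
    by (metis append.right_neutral, simp add: restr_def fun_eq_iff)
  moreover have "g \<epsilon> = g (\<mu>' @ \<epsilon>') @ restr g (\<mu>' @ \<epsilon>') u"
    unfolding u by (rule prefix_preserving_append[OF g])
  moreover have "g' (\<epsilon>' @ u) = g' \<epsilon>' @ restr g' \<epsilon>' u"
    by (rule prefix_preserving_append[OF prefix_preserving_TG[OF g']])
  ultimately have "\<eta> @ h \<epsilon> = \<eta>' @ g' (\<epsilon>' @ u)" "restr h \<epsilon> = restr g' (\<epsilon>' @ u)"
    using img res u by (simp_all flip: restr_restr)
  moreover have "w \<in> cyl \<epsilon>"
    by (simp add: \<epsilon>_def)
  ultimately show "q \<in> germ n al (\<eta>, h, []) w"
    unfolding q_def germ_def germ_rel_def using g' \<open>w' = w\<close> \<open>w \<in> cyl \<mu>'\<close> u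
    by (auto intro!: exI[of _ \<epsilon>] exI[of _ "\<epsilon>' @ u"])
qed

lemma germ_eq_iff_agree:
  assumes g: "g \<in> TG n al" and h: "h \<in> TG n al"
  shows "germ n al (\<eta>, g, []) w = germ n al (\<eta>, h, []) w \<longleftrightarrow>
    (\<exists>\<mu>. w \<in> cyl \<mu> \<and> (\<forall>v. g (\<mu> @ v) = h (\<mu> @ v)))"
proof
  assume "germ n al (\<eta>, g, []) w = germ n al (\<eta>, h, []) w"
  then have "((\<eta>, g, []), w) \<in> germ n al (\<eta>, h, []) w"
    using germ_self[OF g, of w "[]" \<eta>] by simp
  then obtain \<mu> where "w \<in> cyl \<mu>" "h \<mu> = g \<mu>" "restr h \<mu> = restr g \<mu>"
    unfolding germ_def germ_rel_def by auto
  moreover have "g (\<mu> @ v) = h (\<mu> @ v)" if "h \<mu> = g \<mu>" "restr h \<mu> = restr g \<mu>" for v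
    using that prefix_preserving_append[OF prefix_preserving_TG[OF g]]
      prefix_preserving_append[OF prefix_preserving_TG[OF h]] by metis
  ultimately show "\<exists>\<mu>. w \<in> cyl \<mu> \<and> (\<forall>v. g (\<mu> @ v) = h (\<mu> @ v))"
    by blast
next
  assume "\<exists>\<mu>. w \<in> cyl \<mu> \<and> (\<forall>v. g (\<mu> @ v) = h (\<mu> @ v))"
  then obtain \<mu> where "w \<in> cyl \<mu>" "\<And>v. g (\<mu> @ v) = h (\<mu> @ v)"
    by blast
  then show "germ n al (\<eta>, g, []) w = germ n al (\<eta>, h, []) w"
    by (intro equalityI germ_subset_if_agree prefix_preserving_TG[OF g] prefix_preserving_TG[OF h]) auto
qed

lemma germ_in_Theta_iff:
  assumes "g \<in> TG n al"
  shows "germ n al (\<eta>, g, []) w \<in> Theta n al s U \<longleftrightarrow>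
    w \<in> U \<and> germ n al (\<eta>, g, []) w = germ n al s w"
proof
  assume "germ n al (\<eta>, g, []) w \<in> Theta n al s U"
  then obtain w' where "w' \<in> U" and eq: "germ n al (\<eta>, g, []) w = germ n al s w'"
    unfolding Theta_def by auto
  moreover have "((\<eta>, g, []), w) \<in> germ n al s w'"
    using germ_self[OF assms, of w "[]" \<eta>] eq by simp
  then have "w' = w"
    by (auto dest: germ_snd)
  ultimately show "w \<in> U \<and> germ n al (\<eta>, g, []) w = germ n al s w"
    by simp
qed (auto simp: Theta_def)

lemma openin_Theta:
  assumes "g \<in> TG n al" "cantor_open U" "U \<subseteq> cyl \<mu>"
  shows "openin (germ_top n al) (Theta n al (\<eta>, g, \<mu>) U)"
  unfolding germ_top_def
  by (rule topology_generated_by_Basis) (use assms in \<open>auto simp: basic_bisections_def\<close>)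

lemma singular_imp_zero_in_open:
  assumes "singular n al f" "openin (germ_top n al) S" "S \<noteq> {}"
  shows "\<exists>x\<in>S. f x = 0"
proof (rule ccontr)
  assume "\<not> (\<exists>x\<in>S. f x = 0)"
  then have "S \<subseteq> {x \<in> topspace (germ_top n al). f x \<noteq> 0}"
    using openin_subset[OF assms(2)] by auto
  then have "S \<subseteq> germ_top n al interior_of {x \<in> topspace (germ_top n al). f x \<noteq> 0}"
    using interior_of_maximal assms(2) by blast
  with assms(1,3) show False
    unfolding singular_def by simp
qed

section \<open>Germs of \<open>\<iota>(b)\<close> on the cylinders \<open>C(1\<^sup>k0)\<close>\<close>

definition ones_zero :: "nat \<Rightarrow> bool list" where
  "ones_zero k = replicate k True @ [False]"

lemma length_ones_zero [simp]: "length (ones_zero k) = Suc k"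
  by (simp add: ones_zero_def)

lemma cyl_ones_zero_subset: "m \<le> k \<Longrightarrow> cyl (ones_zero k) \<subseteq> cyl (replicate m True)"
  by (auto simp: cyl_def ones_zero_def nth_append)

lemma cyl_ones_zero_nonempty: "cyl (ones_zero k) \<noteq> {}"
proof -
  have "(\<lambda>i. i < k) \<in> cyl (ones_zero k)"
    by (auto simp: cyl_def ones_zero_def nth_append)
  then show ?thesis
    by blast
qed

lemma iota_ones_zero_append:
  "iota n al b (ones_zero k @ v) =
    ones_zero k @ (if trace n (al ^ k * b) = 1 then flipA v else v)"
  unfolding ones_zero_def by (induction k arbitrary: b) (simp_all add: mult.assoc mult.left_commute)

lemma iota_agree_iff_trace:
  assumes w: "w \<in> cyl (ones_zero k)"
  shows "(\<exists>\<mu>. w \<in> cyl \<mu> \<and> (\<forall>v. iota n al b (\<mu> @ v) = iota n al b' (\<mu> @ v))) \<longleftrightarrow>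
    ((trace n (al ^ k * b) = 1) \<longleftrightarrow> (trace n (al ^ k * b') = 1))"
proof
  assume "\<exists>\<mu>. w \<in> cyl \<mu> \<and> (\<forall>v. iota n al b (\<mu> @ v) = iota n al b' (\<mu> @ v))"
  then obtain \<mu> where \<mu>: "w \<in> cyl \<mu>" and agree: "\<And>v. iota n al b (\<mu> @ v) = iota n al b' (\<mu> @ v)"
    by blast
  \<comment> \<open>one letter beyond \<open>1\<^sup>k0\<close> is needed to see whether \<open>a\<close> is applied\<close>
  define L where "L = max (length \<mu>) (k + 2)"
  define z where "z = pref w L"
  have "iota n al b z = iota n al b' z"
    using agree pref_eq_append[OF \<mu>, of L] unfolding z_def L_def by (metis max.cobounded1)
  moreover have "z = ones_zero k @ drop (Suc k) z"
    using pref_eq_append[OF w, of L] unfolding z_def L_def by simp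
  moreover obtain x v where "drop (Suc k) z = x # v"
    by (cases "drop (Suc k) z") (simp_all add: z_def L_def)
  ultimately show "(trace n (al ^ k * b) = 1) \<longleftrightarrow> (trace n (al ^ k * b') = 1)"
    by (cases x) (auto simp: iota_ones_zero_append split: if_splits)
next
  assume "(trace n (al ^ k * b) = 1) \<longleftrightarrow> (trace n (al ^ k * b') = 1)"
  then show "\<exists>\<mu>. w \<in> cyl \<mu> \<and> (\<forall>v. iota n al b (\<mu> @ v) = iota n al b' (\<mu> @ v))"
    using w by (intro exI[of _ "ones_zero k"]) (simp add: iota_ones_zero_append)
qed

lemma germ_iota_in_Uset_iff:
  assumes "m \<le> k" "w \<in> cyl (ones_zero k)"
  shows "germ n al ([], iota n al b', []) w \<in> Uset n al m (iota n al b) \<longleftrightarrow>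
    ((trace n (al ^ k * b) = 1) \<longleftrightarrow> (trace n (al ^ k * b') = 1))"
  using assms cyl_ones_zero_subset
  unfolding Uset_def germ_in_Theta_iff[OF iota_in_TG] germ_eq_iff_agree[OF iota_in_TG iota_in_TG]
    iota_agree_iff_trace[OF assms(2)] by auto

lemma inj_iota:
  fixes al :: "'F::{field,finite}"
  assumes "CARD('F) = 2 ^ n" "n \<ge> 1" and gen: "\<forall>x::'F. x \<noteq> 0 \<longrightarrow> (\<exists>k. x = al ^ k)"
  shows "inj (iota n al)"
proof
  fix b b' :: 'F
  assume eq: "iota n al b = iota n al b'"
  have same_trace: "(trace n (al ^ k * b) = 1) = (trace n (al ^ k * b') = 1)" for k
    using eq[THEN fun_cong, of "ones_zero k @ [False]"]
    by (simp add: iota_ones_zero_append split: if_splits)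
  show "b = b'"
  proof (rule ccontr)
    assume "b \<noteq> b'"
    then obtain \<gamma> where "\<gamma> \<noteq> 0" and sep: "(trace n (\<gamma> * b) = 1) \<noteq> (trace n (\<gamma> * b') = 1)"
      using trace_separates_points[OF assms(1,2)] by blast
    moreover obtain k where "\<gamma> = al ^ k"
      using gen \<open>\<gamma> \<noteq> 0\<close> by blast
    ultimately show False
      using same_trace[of k] by simp
  qed
qed

lemma sum_indicator_Uset_at_iota_germ:
  fixes al :: "'F::{field,finite}" and c :: "(bool list \<Rightarrow> bool list) \<Rightarrow> 'K::semiring_1"
  assumes "inj (iota n al)" "m \<le> k" "w \<in> cyl (ones_zero k)"
  shows "(\<Sum>g\<in>N0 n al. c g * indicator (Uset n al m g) (germ n al ([], iota n al b', []) w)) =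
    sum (c \<circ> iota n al) {b. (trace n (al ^ k * b) = 1) = (trace n (al ^ k * b') = 1)}"
  unfolding N0_def sum.reindex[OF assms(1)] indicator_def
  by (simp add: germ_iota_in_Uset_iff[OF assms(2,3)])

lemma singular_imp_trace_fibre_sums_vanish:
  fixes al :: "'F::{field,finite}" and c :: "(bool list \<Rightarrow> bool list) \<Rightarrow> 'K::semiring_1"
  assumes sing: "singular n al (\<lambda>x. \<Sum>g\<in>N0 n al. c g * indicator (Uset n al m g) x)"
    and inj: "inj (iota n al)" and "m \<le> k"
  shows "sum (c \<circ> iota n al) {b. (trace n (al ^ k * b) = 1) = t} = 0"
proof (cases "\<exists>b'. (trace n (al ^ k * b') = 1) = t")
  case True
  then obtain b' where b': "(trace n (al ^ k * b') = 1) = t"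
    by blast
  let ?S = "Theta n al ([], iota n al b', []) (cyl (ones_zero k))"
  have "openin (germ_top n al) ?S"
    by (rule openin_Theta[OF iota_in_TG cantor_open_cyl]) simp
  moreover have "?S \<noteq> {}"
    using cyl_ones_zero_nonempty by (simp add: Theta_def)
  ultimately obtain w where w: "w \<in> cyl (ones_zero k)"
    and "(\<Sum>g\<in>N0 n al. c g * indicator (Uset n al m g) (germ n al ([], iota n al b', []) w)) = 0"
    using singular_imp_zero_in_open[OF sing] by (auto simp: Theta_def)
  then have "sum (c \<circ> iota n al) {b. (trace n (al ^ k * b) = 1) = (trace n (al ^ k * b') = 1)} = 0"
    by (simp only: sum_indicator_Uset_at_iota_germ[OF inj \<open>m \<le> k\<close> w])
  then show ?thesis
    by (simp only: b')
qed simp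

theorem mainTheorem6:
  fixes al :: "'F::{field,finite}" and n m :: nat
    and c :: "(bool list \<Rightarrow> bool list) \<Rightarrow> 'K::field_char_0"
  assumes "n \<ge> 2"
    and "CARD('F) = 2 ^ n"
    and "\<forall>x::'F. x \<noteq> 0 \<longrightarrow> (\<exists>k::nat. x = al ^ k)"
  defines "f \<equiv> (\<lambda>x. \<Sum>g\<in>N0 n al. c g * indicator (Uset n al m g) x)"
  shows "singular n al f \<longleftrightarrow> f = (\<lambda>_. 0)"
proof
  assume sing: "singular n al f"
  have n_pos: "n \<ge> 1" and card: "2 < CARD('F)"
    using assms(1,2) power_increasing[of 2 n "2::nat"] by simp_all
  have inj: "inj (iota n al)"
    using inj_iota assms(2,3) n_pos by blast
  have "sum (c \<circ> iota n al) {b. (trace n (\<gamma> * b) = 1) = t} = 0" if \<gamma>: "\<gamma> \<noteq> 0" for \<gamma> t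
  proof -
    obtain k where "m \<le> k" "\<gamma> = al ^ k"
      using generator_power_ge[OF card assms(3) \<gamma>] by blast
    then show ?thesis
      using singular_imp_trace_fibre_sums_vanish[OF sing[unfolded f_def] inj] by simp
  qed
  then have "c (iota n al b) = 0" for b
    using eq_0_if_trace_fibre_sums_vanish[OF assms(2) n_pos, of "c \<circ> iota n al"] by simp
  then show "f = (\<lambda>_. 0)"
    unfolding f_def N0_def by (auto intro!: sum.neutral)
next
  assume "f = (\<lambda>_. 0)"
  then show "singular n al f"
    by (simp add: singular_def)
qed

end
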